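(* Let $R$ be an $n$-ary relation on a domain $\mathcal{D}$ with finite ternarity that has no unary Cartesian factor. Then $\mathrm{ter}(R)$ and $n$ have the same parity.
   Context: Relations are attributed: $R\subseteq\mathcal{D}^\Sigma$, $\Sigma$ finite, arity $n=|\Sigma|$; $\pi_\Gamma$ restricts tuples to $\Gamma$; the join of $R_i\subseteq\mathcal{D}^{\Lambda_i}$ is $\{a\in\mathcal{D}^{\cup\Lambda_i}:a|_{\Lambda_i}\in R_i\ \forall i\}$. $R$ has a unary Cartesian factor if for some $i\in\Sigma$ there are $P\subseteq\mathcal{D}^{\{i\}}$ and $Q\subseteq\mathcal{D}^{\Sigma\setminus\{i\}}$ with $R=\{a: a|_{\{i\}}\in P,\ a|_{\Sigma\setminus\{i\}}\in Q\}$. Bonds: relations $R_i\subseteq\mathcal{D}^{\Lambda_i}$ are bondable if no attribute lies in three or more $\Lambda_i$; their bond is $\pi_\Gamma[R_1\Join\dots\Join R_m]$ where $\Gamma$ is the set of attributes lying in exactly one $\Lambda_i$. A bond is subternaric if all factors have arity $\le3$. The ternarity $\mathrm{ter}(R)$ is the minimal number of factors of arity $3$ over all representations of $R$ as a subternaric bond (a relation of arity $\le3$ counts as a one-factor bond of itself), and $\infty$ if none exists. *)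

theory Defs
  imports "HOL-Library.FuncSet" "HOL-Library.Extended_Nat"
begin

text \<open>A factor of a bond is a pair (\<Lambda>, S) with S a relation over attributes \<Lambda>.\<close>

definition tuples :: "'d set \<Rightarrow> nat set \<Rightarrow> (nat \<Rightarrow> 'd) set" where
  "tuples D \<Sigma> = PiE \<Sigma> (\<lambda>_. D)"

definition proj :: "nat set \<Rightarrow> (nat \<Rightarrow> 'd) set \<Rightarrow> (nat \<Rightarrow> 'd) set" where
  "proj \<Gamma> R = (\<lambda>a. restrict a \<Gamma>) ` R"

definition join :: "'d set \<Rightarrow> (nat set \<times> (nat \<Rightarrow> 'd) set) list \<Rightarrow> (nat \<Rightarrow> 'd) set" where
  "join D Fs = {a \<in> tuples D (\<Union>i<length Fs. fst (Fs ! i)).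
                 \<forall>i<length Fs. restrict a (fst (Fs ! i)) \<in> snd (Fs ! i)}"

definition occ :: "(nat set \<times> (nat \<Rightarrow> 'd) set) list \<Rightarrow> nat \<Rightarrow> nat" where
  "occ Fs x = card {i. i < length Fs \<and> x \<in> fst (Fs ! i)}"

definition bondable :: "(nat set \<times> (nat \<Rightarrow> 'd) set) list \<Rightarrow> bool" where
  "bondable Fs \<longleftrightarrow> (\<forall>x. occ Fs x \<le> 2)"

definition free_attrs :: "(nat set \<times> (nat \<Rightarrow> 'd) set) list \<Rightarrow> nat set" where
  "free_attrs Fs = {x. occ Fs x = 1}"

definition bond :: "'d set \<Rightarrow> (nat set \<times> (nat \<Rightarrow> 'd) set) list \<Rightarrow> (nat \<Rightarrow> 'd) set" where
  "bond D Fs = proj (free_attrs Fs) (join D Fs)"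

definition subternaric_bond_rep ::
  "'d set \<Rightarrow> nat set \<Rightarrow> (nat \<Rightarrow> 'd) set \<Rightarrow> (nat set \<times> (nat \<Rightarrow> 'd) set) list \<Rightarrow> bool" where
  "subternaric_bond_rep D \<Sigma> R Fs \<longleftrightarrow>
     (\<forall>i<length Fs. finite (fst (Fs ! i)) \<and> snd (Fs ! i) \<subseteq> tuples D (fst (Fs ! i))
                    \<and> card (fst (Fs ! i)) \<le> 3)
     \<and> bondable Fs \<and> free_attrs Fs = \<Sigma> \<and> bond D Fs = R"

definition num_ternary :: "(nat set \<times> (nat \<Rightarrow> 'd) set) list \<Rightarrow> nat" where
  "num_ternary Fs = card {i. i < length Fs \<and> card (fst (Fs ! i)) = 3}"

definition ter :: "'d set \<Rightarrow> nat set \<Rightarrow> (nat \<Rightarrow> 'd) set \<Rightarrow> enat" where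
  "ter D \<Sigma> R = Inf {enat (num_ternary Fs) | Fs. subternaric_bond_rep D \<Sigma> R Fs}"

definition has_unary_cartesian_factor :: "'d set \<Rightarrow> nat set \<Rightarrow> (nat \<Rightarrow> 'd) set \<Rightarrow> bool" where
  "has_unary_cartesian_factor D \<Sigma> R \<longleftrightarrow>
     (\<exists>i\<in>\<Sigma>. \<exists>P Q. P \<subseteq> tuples D {i} \<and> Q \<subseteq> tuples D (\<Sigma> - {i}) \<and>
        R = {a \<in> tuples D \<Sigma>. restrict a {i} \<in> P \<and> restrict a (\<Sigma> - {i}) \<in> Q})"

end

theory Submission
  imports Defs
begin

text \<open>Summing the arities of the factors of a subternaric bond counts each free attribute once and
each bound attribute twice, so the number of factors of odd arity has the parity of the arity n
of the bond. If no factor is unary, the factors of odd arity are exactly the ternary ones.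
A unary factor on a free attribute is a unary Cartesian factor of the relation; a unary factor on
a bound attribute x can be absorbed into the other factor containing x, which lowers that
factor's arity and therefore creates no new ternary factor. Absorbing unary factors one by one
turns a representation with ter(R) ternary factors into one without unary factors and with at
most, hence exactly, ter(R) ternary factors, whose number has the parity of n.\<close>

type_synonym 'd factor = "nat set \<times> (nat \<Rightarrow> 'd) set"

abbreviation attrs :: "'d factor list \<Rightarrow> nat set" where
  "attrs Fs \<equiv> \<Union>i<length Fs. fst (Fs ! i)"

lemma mem_tuples_iff:
  "a \<in> tuples D A \<longleftrightarrow> (\<forall>y\<in>A. a y \<in> D) \<and> (\<forall>y. y \<notin> A \<longrightarrow> a y = undefined)"
  by (auto simp: tuples_def PiE_iff extensional_def)

lemma restrict_in_tuples:
  assumes "a \<in> tuples D B" "A \<subseteq> B"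
  shows "restrict a A \<in> tuples D A"
  using assms by (auto simp: mem_tuples_iff)

lemma restrict_tuples [simp]: "a \<in> tuples D A \<Longrightarrow> restrict a A = a"
  by (simp add: tuples_def)

lemma restrict_in_tuples_empty [simp]: "restrict a {} \<in> tuples D {}"
  by (simp add: mem_tuples_iff)

lemma override_on_in_tuples:
  assumes "b \<in> tuples D B" "a \<in> tuples D A" "C \<subseteq> A"
  shows "override_on b a C \<in> tuples D (B \<union> C)"
  using assms by (auto simp: mem_tuples_iff override_on_def)

lemma restrict_override_on:
  assumes "restrict b (A - C) = restrict c (A - C)"
  shows "restrict (override_on b c C) A = restrict c A"
proof (rule restrict_ext)
  fix y assume "y \<in> A"
  then show "override_on b c C y = c y"
    using fun_cong[OF assms, of y] by (cases "y \<in> C") auto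
qed

lemma restrict_override_on_disjoint:
  "A \<inter> C = {} \<Longrightarrow> restrict (override_on b c C) A = restrict b A"
  by (intro restrict_ext) (auto simp: override_on_def)

lemma proj_subset_tuples:
  assumes "J \<subseteq> tuples D U" "\<Gamma> \<subseteq> U"
  shows "proj \<Gamma> J \<subseteq> tuples D \<Gamma>"
  using assms by (auto simp: proj_def intro: restrict_in_tuples)

lemma join_subset_tuples: "join D Fs \<subseteq> tuples D (attrs Fs)"
  by (auto simp: join_def)

lemma join_pair:
  "join D [F, G] = {a \<in> tuples D (fst F \<union> fst G). restrict a (fst F) \<in> snd F \<and> restrict a (fst G) \<in> snd G}"
proof -
  have "{..<length [F, G]} = {0, 1}" by auto
  then show ?thesis
    unfolding join_def by (auto simp: less_Suc_eq)
qed

lemma sum_nth_list_update: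
  fixes f :: "'a \<Rightarrow> 'b::comm_monoid_add"
  assumes "k < length xs"
  shows "(\<Sum>i<length xs. f (xs[k := x] ! i)) + f (xs ! k) = (\<Sum>i<length xs. f (xs ! i)) + f x"
proof -
  have rest: "(\<Sum>i\<in>{..<length xs} - {k}. f (xs[k := x] ! i)) = (\<Sum>i\<in>{..<length xs} - {k}. f (xs ! i))"
    by (rule sum.cong) auto
  have "k \<in> {..<length xs}" using assms by simp
  then show ?thesis
    using assms by (simp add: sum.remove[of "{..<length xs}" k] rest add_ac)
qed

lemma occ_eq_sum: "occ Fs y = (\<Sum>i<length Fs. of_bool (y \<in> fst (Fs ! i)))"
  unfolding occ_def by (subst sum_of_bool_eq) (auto simp: Int_def)

lemma num_ternary_eq_sum: "num_ternary Fs = (\<Sum>i<length Fs. of_bool (card (fst (Fs ! i)) = 3))"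
  unfolding num_ternary_def by (subst sum_of_bool_eq) (auto simp: Int_def)

definition weight :: "'d factor list \<Rightarrow> nat" where
  "weight Fs = (\<Sum>i<length Fs. card (fst (Fs ! i)))"

lemma occ_list_update:
  "k < length Fs \<Longrightarrow> occ (Fs[k := F]) y + of_bool (y \<in> fst (Fs ! k)) = occ Fs y + of_bool (y \<in> fst F)"
  unfolding occ_eq_sum
  using sum_nth_list_update[where f = "\<lambda>F. of_bool (y \<in> fst F)" and xs = Fs and x = F]
  by (simp only: length_list_update)

lemma weight_list_update:
  "k < length Fs \<Longrightarrow> weight (Fs[k := F]) + card (fst (Fs ! k)) = weight Fs + card (fst F)"
  unfolding weight_def
  using sum_nth_list_update[where f = "\<lambda>F. card (fst F)" and xs = Fs and x = F]
  by (simp only: length_list_update)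

lemma num_ternary_list_update:
  "k < length Fs \<Longrightarrow> num_ternary (Fs[k := F]) + of_bool (card (fst (Fs ! k)) = 3)
     = num_ternary Fs + of_bool (card (fst F) = 3)"
  unfolding num_ternary_eq_sum
  using sum_nth_list_update[where f = "\<lambda>F. of_bool (card (fst F) = 3)" and xs = Fs and x = F]
  by (simp only: length_list_update)

lemma card_le_occ:
  assumes "I \<subseteq> {..<length Fs}" "\<forall>i\<in>I. y \<in> fst (Fs ! i)"
  shows "card I \<le> occ Fs y"
  unfolding occ_def using assms by (intro card_mono) auto

lemma exists_other_factor:
  assumes "2 \<le> occ Fs y" "k < length Fs"
  shows "\<exists>j<length Fs. j \<noteq> k \<and> y \<in> fst (Fs ! j)"
proof (rule ccontr)
  assume "\<not> ?thesis"
  then have "{i. i < length Fs \<and> y \<in> fst (Fs ! i)} \<subseteq> {k}"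
    by auto
  then have "occ Fs y \<le> 1"
    unfolding occ_def using card_mono[of "{k}"] by fastforce
  then show False
    using assms(1) by simp
qed

lemma occ_pos_iff: "0 < occ Fs y \<longleftrightarrow> y \<in> attrs Fs"
  by (auto simp: occ_def card_gt_0_iff)

lemma free_attrs_subset_attrs: "free_attrs Fs \<subseteq> attrs Fs"
  using occ_pos_iff by (fastforce simp: free_attrs_def)

lemma free_attrs_pair: "free_attrs [F, G] = (fst F \<union> fst G) - (fst F \<inter> fst G)"
  by (auto simp: free_attrs_def occ_eq_sum)

lemma bond_subset_tuples: "bond D Fs \<subseteq> tuples D (free_attrs Fs)"
  unfolding bond_def using join_subset_tuples free_attrs_subset_attrs by (rule proj_subset_tuples)

lemma weight_eq_sum_occ:
  assumes "\<forall>i<length Fs. finite (fst (Fs ! i))"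
  shows "weight Fs = (\<Sum>y\<in>attrs Fs. occ Fs y)"
proof -
  have card_eq: "card (fst (Fs ! i)) = (\<Sum>y\<in>attrs Fs. of_bool (y \<in> fst (Fs ! i)))" if "i < length Fs" for i
  proof -
    have "attrs Fs \<inter> {y. y \<in> fst (Fs ! i)} = fst (Fs ! i)"
      using that by blast
    then show ?thesis
      using assms that by simp
  qed
  have "weight Fs = (\<Sum>i<length Fs. \<Sum>y\<in>attrs Fs. of_bool (y \<in> fst (Fs ! i)))"
    unfolding weight_def using card_eq by (intro sum.cong) (auto simp del: sum_of_bool_eq)
  also have "\<dots> = (\<Sum>y\<in>attrs Fs. occ Fs y)"
    by (subst sum.swap) (rule sum.cong[OF refl], rule occ_eq_sum[symmetric])
  finally show ?thesis .
qed

lemma even_num_ternary_iff_even_card: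
  assumes rep: "subternaric_bond_rep D \<Sigma> R Fs" and no_unary: "\<forall>i<length Fs. card (fst (Fs ! i)) \<noteq> 1"
  shows "even (num_ternary Fs) \<longleftrightarrow> even (card \<Sigma>)"
proof -
  have fin: "\<forall>i<length Fs. finite (fst (Fs ! i))" and small: "\<forall>i<length Fs. card (fst (Fs ! i)) \<le> 3"
    and bd: "bondable Fs" and \<Sigma>: "free_attrs Fs = \<Sigma>"
    using rep by (auto simp: subternaric_bond_rep_def)
  have "{i \<in> {..<length Fs}. odd (card (fst (Fs ! i)))} = {i. i < length Fs \<and> card (fst (Fs ! i)) = 3}"
  proof -
    have "odd c \<longleftrightarrow> c = 3" if "c \<le> 3" "c \<noteq> 1" for c :: nat
      using that by (auto simp: le_Suc_eq numeral_3_eq_3)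
    then show ?thesis
      using small no_unary by auto
  qed
  then have "even (weight Fs) \<longleftrightarrow> even (num_ternary Fs)"
    unfolding weight_def num_ternary_def by (simp add: even_sum_iff)
  moreover have odd_occ: "{y \<in> attrs Fs. odd (occ Fs y)} = \<Sigma>"
  proof -
    have "odd (occ Fs y) \<longleftrightarrow> occ Fs y = 1" for y
      using bd by (auto simp: bondable_def le_Suc_eq numeral_2_eq_2 dest: spec[of _ y])
    then show ?thesis
      using \<Sigma> free_attrs_subset_attrs[of Fs] by (auto simp: free_attrs_def)
  qed
  have "even (weight Fs) \<longleftrightarrow> even (card {y \<in> attrs Fs. odd (occ Fs y)})"
    using fin by (simp only: weight_eq_sum_occ[OF fin]) (rule even_sum_iff, blast)
  then have "even (weight Fs) \<longleftrightarrow> even (card \<Sigma>)"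
    by (simp only: odd_occ)
  ultimately show ?thesis by simp
qed

lemma attrs_remove_private_factor:
  assumes k: "k < length Fs" and free: "\<forall>y\<in>fst (Fs ! k). occ Fs y = 1"
  shows "attrs (Fs[k := ({}, tuples D {})]) = attrs Fs - fst (Fs ! k)"
proof -
  have "occ (Fs[k := ({}, tuples D {})]) y = (if y \<in> fst (Fs ! k) then 0 else occ Fs y)" for y
    using occ_list_update[OF k, of "({}, tuples D {})" y] free by auto
  then have "y \<in> attrs (Fs[k := ({}, tuples D {})]) \<longleftrightarrow> y \<in> attrs Fs \<and> y \<notin> fst (Fs ! k)" for y
    by (simp only: occ_pos_iff[symmetric]) simp
  then show ?thesis by blast
qed

lemma join_private_factor:
  assumes k: "k < length Fs" and free: "\<forall>y\<in>fst (Fs ! k). occ Fs y = 1"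
  shows "join D Fs = {e \<in> tuples D (attrs Fs). restrict e (fst (Fs ! k)) \<in> snd (Fs ! k)
           \<and> restrict e (attrs Fs - fst (Fs ! k)) \<in> join D (Fs[k := ({}, tuples D {})])}"
    (is "_ = {e \<in> _. _ \<and> restrict e ?V \<in> join D ?Fs'}")
proof -
  have attrs': "attrs ?Fs' = ?V"
    using attrs_remove_private_factor[OF assms] .
  have other: "?Fs' ! i = Fs ! i" "fst (Fs ! i) \<subseteq> ?V" if "i < length Fs" "i \<noteq> k" for i
  proof -
    show "?Fs' ! i = Fs ! i"
      using that by simp
    moreover have "fst (?Fs' ! i) \<subseteq> attrs ?Fs'"
      using that by (intro UN_upper) simp
    ultimately show "fst (Fs ! i) \<subseteq> ?V"
      using attrs' by simp
  qed
  have "restrict e ?V \<in> join D ?Fs' \<longleftrightarrow> (\<forall>i<length Fs. i \<noteq> k \<longrightarrow> restrict e (fst (Fs ! i)) \<in> snd (Fs ! i))"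
    if "e \<in> tuples D (attrs Fs)" for e
  proof -
    have "restrict e ?V \<in> tuples D ?V"
      using that by (rule restrict_in_tuples) blast
    moreover have "restrict (restrict e ?V) (fst (Fs ! i)) = restrict e (fst (Fs ! i))"
      if "i < length Fs" "i \<noteq> k" for i
      using other[OF that] by (simp add: Int_absorb1)
    ultimately show ?thesis
      using attrs' other k by (auto simp: join_def nth_list_update)
  qed
  then show ?thesis
    using k by (auto simp: join_def[of D Fs])
qed

lemma in_bond_from_private_factor:
  assumes k: "k < length Fs" and free: "\<forall>y\<in>fst (Fs ! k). occ Fs y = 1"
    and a: "a \<in> tuples D (free_attrs Fs)" and a_k: "restrict a (fst (Fs ! k)) \<in> snd (Fs ! k)"
    and b: "b \<in> join D (Fs[k := ({}, tuples D {})])"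
    and ab: "restrict b (free_attrs Fs - fst (Fs ! k)) = restrict a (free_attrs Fs - fst (Fs ! k))"
  shows "a \<in> bond D Fs"
proof -
  let ?\<Lambda> = "fst (Fs ! k)" and ?V = "attrs Fs - fst (Fs ! k)"
  have "b \<in> tuples D (attrs (Fs[k := ({}, tuples D {})]))"
    using b join_subset_tuples by blast
  then have b_tuple: "b \<in> tuples D ?V"
    using attrs_remove_private_factor[OF k free] by simp
  define e where "e = override_on b a ?\<Lambda>"
  have "e \<in> tuples D (?V \<union> ?\<Lambda>)"
    unfolding e_def using b_tuple a by (rule override_on_in_tuples) (use free in \<open>auto simp: free_attrs_def\<close>)
  moreover have "?V \<union> ?\<Lambda> = attrs Fs"
    using k by blast
  moreover have "restrict e ?\<Lambda> = restrict a ?\<Lambda>"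
    unfolding e_def by (rule restrict_override_on, rule restrict_ext) simp
  moreover have "restrict e ?V = b"
    unfolding e_def using b_tuple by (subst restrict_override_on_disjoint) auto
  ultimately have "e \<in> join D Fs"
    using join_private_factor[OF k free] a_k b by simp
  moreover have "restrict e (free_attrs Fs) = a"
    unfolding e_def using ab a by (subst restrict_override_on) auto
  ultimately show ?thesis
    by (auto simp: bond_def proj_def)
qed

lemma bond_split_private_factor:
  assumes k: "k < length Fs" and free: "\<forall>y\<in>fst (Fs ! k). occ Fs y = 1"
  shows "bond D Fs = {a \<in> tuples D (free_attrs Fs). restrict a (fst (Fs ! k)) \<in> snd (Fs ! k)
           \<and> restrict a (free_attrs Fs - fst (Fs ! k))
               \<in> proj (free_attrs Fs - fst (Fs ! k)) (join D (Fs[k := ({}, tuples D {})]))}"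
    (is "_ = {a \<in> tuples D ?\<Sigma>. restrict a ?\<Lambda> \<in> _ \<and> restrict a (?\<Sigma> - ?\<Lambda>) \<in> proj _ (join D ?Fs')}")
proof (intro equalityI subsetI)
  fix a assume "a \<in> bond D Fs"
  then obtain e where e: "e \<in> join D Fs" and a: "a = restrict e ?\<Sigma>"
    by (auto simp: bond_def proj_def)
  let ?V = "attrs Fs - ?\<Lambda>"
  have \<Sigma>_attrs: "?\<Sigma> \<subseteq> attrs Fs"
    by (rule free_attrs_subset_attrs)
  have "e \<in> tuples D (attrs Fs)"
    using e join_subset_tuples by blast
  then have "a \<in> tuples D ?\<Sigma>"
    unfolding a using \<Sigma>_attrs by (rule restrict_in_tuples)
  moreover have "?\<Sigma> \<inter> ?\<Lambda> = ?\<Lambda>"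
    using free by (auto simp: free_attrs_def)
  then have "restrict a ?\<Lambda> \<in> snd (Fs ! k)"
    using a e k by (simp add: join_def)
  moreover have "restrict e ?V \<in> join D ?Fs'"
    using e join_private_factor[OF k free] by blast
  moreover have "?\<Sigma> \<inter> (?\<Sigma> - ?\<Lambda>) = ?V \<inter> (?\<Sigma> - ?\<Lambda>)"
    using \<Sigma>_attrs by blast
  ultimately show "a \<in> {a \<in> tuples D ?\<Sigma>. restrict a ?\<Lambda> \<in> snd (Fs ! k)
      \<and> restrict a (?\<Sigma> - ?\<Lambda>) \<in> proj (?\<Sigma> - ?\<Lambda>) (join D ?Fs')}"
    unfolding proj_def a by (auto intro!: image_eqI[where x = "restrict e ?V"])
next
  fix a assume "a \<in> {a \<in> tuples D ?\<Sigma>. restrict a ?\<Lambda> \<in> snd (Fs ! k)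
      \<and> restrict a (?\<Sigma> - ?\<Lambda>) \<in> proj (?\<Sigma> - ?\<Lambda>) (join D ?Fs')}"
  then show "a \<in> bond D Fs"
    using in_bond_from_private_factor[OF k free] by (auto simp: proj_def)
qed

lemma free_unary_factor_imp_cartesian:
  assumes rep: "subternaric_bond_rep D \<Sigma> R Fs"
    and k: "k < length Fs" "fst (Fs ! k) = {x}" and x_free: "occ Fs x = 1"
  shows "has_unary_cartesian_factor D \<Sigma> R"
proof -
  let ?Fs' = "Fs[k := ({}, tuples D {})]"
  have \<Sigma>: "free_attrs Fs = \<Sigma>" and R: "bond D Fs = R"
    and "snd (Fs ! k) \<subseteq> tuples D (fst (Fs ! k))"
    using rep k(1) by (auto simp: subternaric_bond_rep_def)
  then have P: "snd (Fs ! k) \<subseteq> tuples D {x}"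
    using k(2) by simp
  have free: "\<forall>y\<in>fst (Fs ! k). occ Fs y = 1"
    using k x_free by simp
  have "\<Sigma> - {x} \<subseteq> attrs ?Fs'"
    using attrs_remove_private_factor[OF k(1) free] free_attrs_subset_attrs[of Fs] \<Sigma> k by auto
  then have Q: "proj (\<Sigma> - {x}) (join D ?Fs') \<subseteq> tuples D (\<Sigma> - {x})"
    using join_subset_tuples by (rule proj_subset_tuples[rotated])
  have "x \<in> \<Sigma>"
    unfolding \<Sigma>[symmetric] free_attrs_def using x_free by simp
  then show ?thesis
    unfolding has_unary_cartesian_factor_def
    using bond_split_private_factor[OF k(1) free, of D] P Q \<Sigma> R k by (intro bexI[of _ x]) auto
qed

text \<open>Factor k is replaced by the nullary factor holding the empty tuple, which is neutral for
joins; this keeps the indices of all other factors.\<close>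
definition merge_factors :: "'d set \<Rightarrow> nat \<Rightarrow> nat \<Rightarrow> 'd factor list \<Rightarrow> 'd factor list" where
  "merge_factors D j k Fs =
     Fs[k := ({}, tuples D {}), j := (free_attrs [Fs ! j, Fs ! k], bond D [Fs ! j, Fs ! k])]"

lemma length_merge_factors [simp]: "length (merge_factors D j k Fs) = length Fs"
  by (simp add: merge_factors_def)

lemma card_symdiff_add_card_Int:
  assumes "finite A" "finite B"
  shows "card ((A \<union> B) - (A \<inter> B)) + 2 * card (A \<inter> B) = card A + card B"
proof -
  have "card ((A \<union> B) - (A \<inter> B)) = card (A \<union> B) - card (A \<inter> B)"
    using assms by (intro card_Diff_subset) auto
  moreover have "card (A \<inter> B) \<le> card (A \<union> B)"
    using assms by (intro card_mono) auto
  ultimately show ?thesis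
    using card_Un_Int[OF assms] by simp
qed

context
  fixes D :: "'d set" and Fs :: "'d factor list" and j k :: nat
  assumes j: "j < length Fs" and k: "k < length Fs" and jk: "j \<noteq> k" and bd: "bondable Fs"
begin

lemma nth_merge_factors:
  "i < length Fs \<Longrightarrow> merge_factors D j k Fs ! i =
     (if i = j then (free_attrs [Fs ! j, Fs ! k], bond D [Fs ! j, Fs ! k])
      else if i = k then ({}, tuples D {}) else Fs ! i)"
  using j k jk by (simp add: merge_factors_def)

lemma occ_merge_factors:
  "occ (merge_factors D j k Fs) y = (if y \<in> fst (Fs ! j) \<inter> fst (Fs ! k) then 0 else occ Fs y)"
proof -
  have "occ (Fs[k := ({}, tuples D {})]) y + of_bool (y \<in> fst (Fs ! k)) = occ Fs y"
    using occ_list_update[OF k] by simp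
  moreover have "occ (merge_factors D j k Fs) y + of_bool (y \<in> fst (Fs ! j))
      = occ (Fs[k := ({}, tuples D {})]) y + of_bool (y \<in> free_attrs [Fs ! j, Fs ! k])"
    using occ_list_update[of j "Fs[k := ({}, tuples D {})]"] j jk by (simp add: merge_factors_def)
  moreover have "occ Fs y \<le> 2"
    using bd by (simp add: bondable_def)
  ultimately show ?thesis
    by (auto simp: free_attrs_pair)
qed

lemma attrs_merge_factors:
  "attrs (merge_factors D j k Fs) = attrs Fs - fst (Fs ! j) \<inter> fst (Fs ! k)"
proof -
  have "y \<in> attrs (merge_factors D j k Fs) \<longleftrightarrow> y \<in> attrs Fs \<and> y \<notin> fst (Fs ! j) \<inter> fst (Fs ! k)" for y
    by (simp only: occ_pos_iff[symmetric] occ_merge_factors) simp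
  then show ?thesis by blast
qed

lemma free_attrs_merge_factors: "free_attrs (merge_factors D j k Fs) = free_attrs Fs"
proof -
  have "occ Fs y \<noteq> 1" if "y \<in> fst (Fs ! j) \<inter> fst (Fs ! k)" for y
    using card_le_occ[of "{j, k}" Fs y] that j k jk by auto
  then show ?thesis
    unfolding free_attrs_def occ_merge_factors by (metis zero_neq_one)
qed

lemma bondable_merge_factors: "bondable (merge_factors D j k Fs)"
  using bd by (simp add: bondable_def occ_merge_factors)

lemma weight_merge_factors:
  assumes "finite (fst (Fs ! j))" "finite (fst (Fs ! k))"
  shows "weight (merge_factors D j k Fs) + 2 * card (fst (Fs ! j) \<inter> fst (Fs ! k)) = weight Fs"
proof -
  have "weight (Fs[k := ({}, tuples D {})]) + card (fst (Fs ! k)) = weight Fs"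
    using weight_list_update[OF k] by simp
  moreover have "weight (merge_factors D j k Fs) + card (fst (Fs ! j))
      = weight (Fs[k := ({}, tuples D {})]) + card (free_attrs [Fs ! j, Fs ! k])"
    using weight_list_update[of j "Fs[k := ({}, tuples D {})]"] j jk by (simp add: merge_factors_def)
  ultimately show ?thesis
    using card_symdiff_add_card_Int[OF assms] by (simp add: free_attrs_pair)
qed

lemma num_ternary_merge_factors_le:
  assumes "card (free_attrs [Fs ! j, Fs ! k]) \<noteq> 3"
  shows "num_ternary (merge_factors D j k Fs) \<le> num_ternary Fs"
proof -
  have "num_ternary (Fs[k := ({}, tuples D {})]) \<le> num_ternary Fs"
    using num_ternary_list_update[OF k, of "({}, tuples D {})"] by simp
  moreover have "num_ternary (merge_factors D j k Fs) \<le> num_ternary (Fs[k := ({}, tuples D {})])"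
    using num_ternary_list_update[of j "Fs[k := ({}, tuples D {})]"
      "(free_attrs [Fs ! j, Fs ! k], bond D [Fs ! j, Fs ! k])"] j jk assms
    by (simp add: merge_factors_def)
  ultimately show ?thesis by simp
qed

lemma shared_attrs_disjoint:
  assumes "i < length Fs" "i \<noteq> j" "i \<noteq> k"
  shows "fst (Fs ! i) \<inter> (fst (Fs ! j) \<inter> fst (Fs ! k)) = {}"
proof -
  have "card {i, j, k} \<le> occ Fs y" if "y \<in> fst (Fs ! i) \<inter> (fst (Fs ! j) \<inter> fst (Fs ! k))" for y
    using that assms j k by (intro card_le_occ) auto
  moreover have "occ Fs y \<le> 2" for y
    using bd by (simp add: bondable_def)
  ultimately show ?thesis
    using assms jk by (fastforce dest: le_trans)
qed

lemma restrict_in_join_merge_factors: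
  assumes "e \<in> join D Fs"
  shows "restrict e (attrs Fs - fst (Fs ! j) \<inter> fst (Fs ! k)) \<in> join D (merge_factors D j k Fs)"
    (is "restrict e ?V \<in> join D ?M")
proof -
  let ?\<Lambda> = "free_attrs [Fs ! j, Fs ! k]"
  have e_tuple: "e \<in> tuples D (attrs Fs)" and e_factors: "\<forall>i<length Fs. restrict e (fst (Fs ! i)) \<in> snd (Fs ! i)"
    using assms by (auto simp: join_def)
  have "restrict e (fst (?M ! i)) \<in> snd (?M ! i)" if i: "i < length Fs" for i
  proof -
    consider "i = j" | "i = k" | "i \<noteq> j" "i \<noteq> k" by blast
    then show ?thesis
    proof cases
      case 1
      have "restrict e (fst (Fs ! j) \<union> fst (Fs ! k)) \<in> join D [Fs ! j, Fs ! k]"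
        using e_tuple e_factors j k by (auto simp: join_pair Int_absorb2 intro: restrict_in_tuples)
      moreover have "(fst (Fs ! j) \<union> fst (Fs ! k)) \<inter> ?\<Lambda> = ?\<Lambda>"
        by (auto simp: free_attrs_pair)
      ultimately have "restrict e ?\<Lambda> \<in> bond D [Fs ! j, Fs ! k]"
        unfolding bond_def proj_def by (metis image_eqI restrict_restrict)
      then show ?thesis
        using 1 i by (simp add: nth_merge_factors)
    qed (use i jk e_factors in \<open>auto simp: nth_merge_factors\<close>)
  qed
  moreover have "fst (?M ! i) \<subseteq> ?V" if "i < length Fs" for i
    using that attrs_merge_factors by (metis UN_upper length_merge_factors lessThan_iff)
  ultimately have "restrict (restrict e ?V) (fst (?M ! i)) \<in> snd (?M ! i)" if "i < length Fs" for i
    using that by (simp add: Int_absorb1)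
  moreover have "restrict e ?V \<in> tuples D ?V"
    using e_tuple by (rule restrict_in_tuples) blast
  ultimately show ?thesis
    using attrs_merge_factors by (simp add: join_def)
qed

lemma join_merge_factors_extend:
  assumes "b \<in> join D (merge_factors D j k Fs)"
  shows "\<exists>e\<in>join D Fs. restrict e (attrs Fs - fst (Fs ! j) \<inter> fst (Fs ! k)) = b"
proof -
  let ?M = "merge_factors D j k Fs" and ?C = "fst (Fs ! j) \<inter> fst (Fs ! k)"
    and ?\<Lambda> = "free_attrs [Fs ! j, Fs ! k]"
  have b: "b \<in> tuples D (attrs Fs - ?C)" and b_factors: "\<forall>i<length Fs. restrict b (fst (?M ! i)) \<in> snd (?M ! i)"
    using assms attrs_merge_factors by (auto simp: join_def)
  have "restrict b ?\<Lambda> \<in> proj ?\<Lambda> (join D [Fs ! j, Fs ! k])"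
    using b_factors j by (auto simp: nth_merge_factors bond_def)
  then obtain c where c: "c \<in> join D [Fs ! j, Fs ! k]" and bc: "restrict b ?\<Lambda> = restrict c ?\<Lambda>"
    by (auto simp: proj_def)
  define e where "e = override_on b c ?C"
  have "e \<in> tuples D ((attrs Fs - ?C) \<union> ?C)"
    unfolding e_def using b c by (intro override_on_in_tuples) (auto simp: join_pair)
  moreover have "(attrs Fs - ?C) \<union> ?C = attrs Fs"
    using j by blast
  ultimately have e_tuple: "e \<in> tuples D (attrs Fs)" by simp
  have "restrict e (fst (Fs ! i)) \<in> snd (Fs ! i)" if i: "i < length Fs" for i
  proof (cases "i = j \<or> i = k")
    case True
    then have "fst (Fs ! i) - ?C \<subseteq> ?\<Lambda>"
      by (auto simp: free_attrs_pair)
    then have "restrict b (fst (Fs ! i) - ?C) = restrict c (fst (Fs ! i) - ?C)"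
      using arg_cong[OF bc, of "\<lambda>f. restrict f (fst (Fs ! i) - ?C)"] by (simp add: Int_absorb1)
    then have "restrict e (fst (Fs ! i)) = restrict c (fst (Fs ! i))"
      unfolding e_def by (rule restrict_override_on)
    then show ?thesis
      using True c by (auto simp: join_pair)
  next
    case False
    then have "restrict e (fst (Fs ! i)) = restrict b (fst (Fs ! i))"
      unfolding e_def using shared_attrs_disjoint[OF i] by (intro restrict_override_on_disjoint) auto
    then show ?thesis
      using b_factors[rule_format, OF i] False by (simp add: nth_merge_factors[OF i])
  qed
  then have "e \<in> join D Fs"
    using e_tuple by (simp add: join_def)
  moreover have "restrict e (attrs Fs - ?C) = b"
    unfolding e_def using b by (subst restrict_override_on_disjoint) auto
  ultimately show ?thesis by blast
qed

lemma bond_merge_factors: "bond D (merge_factors D j k Fs) = bond D Fs"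
proof -
  have "join D (merge_factors D j k Fs) = (\<lambda>e. restrict e (attrs Fs - fst (Fs ! j) \<inter> fst (Fs ! k))) ` join D Fs"
    using restrict_in_join_merge_factors join_merge_factors_extend by blast
  moreover have "free_attrs Fs \<subseteq> attrs Fs - fst (Fs ! j) \<inter> fst (Fs ! k)"
    using free_attrs_subset_attrs[of "merge_factors D j k Fs"]
    unfolding free_attrs_merge_factors attrs_merge_factors .
  then have "(attrs Fs - fst (Fs ! j) \<inter> fst (Fs ! k)) \<inter> free_attrs Fs = free_attrs Fs"
    by blast
  ultimately show ?thesis
    by (simp add: bond_def proj_def free_attrs_merge_factors image_image)
qed

end

lemma subternaric_bond_rep_merge_factors:
  assumes rep: "subternaric_bond_rep D \<Sigma> R Fs"
    and j: "j < length Fs" and k: "k < length Fs" and jk: "j \<noteq> k"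
    and card_merged: "card (free_attrs [Fs ! j, Fs ! k]) \<le> 3"
  shows "subternaric_bond_rep D \<Sigma> R (merge_factors D j k Fs)"
proof -
  have bd: "bondable Fs" and factors: "\<forall>i<length Fs. finite (fst (Fs ! i))
      \<and> snd (Fs ! i) \<subseteq> tuples D (fst (Fs ! i)) \<and> card (fst (Fs ! i)) \<le> 3"
    using rep by (auto simp: subternaric_bond_rep_def)
  have "finite (free_attrs [Fs ! j, Fs ! k])"
    using factors j k by (simp add: free_attrs_pair)
  then have "\<forall>i<length Fs. finite (fst (merge_factors D j k Fs ! i))
      \<and> snd (merge_factors D j k Fs ! i) \<subseteq> tuples D (fst (merge_factors D j k Fs ! i))
      \<and> card (fst (merge_factors D j k Fs ! i)) \<le> 3"
    using factors card_merged bond_subset_tuples[of D "[Fs ! j, Fs ! k]"] jk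
    by (simp add: nth_merge_factors[OF j k jk bd])
  then show ?thesis
    using rep bondable_merge_factors[where D = D, OF j k jk bd] bond_merge_factors[OF j k jk bd]
      free_attrs_merge_factors[where D = D, OF j k jk bd]
    by (simp add: subternaric_bond_rep_def)
qed

lemma absorb_unary_factor:
  assumes rep: "subternaric_bond_rep D \<Sigma> R Fs"
    and k: "k < length Fs" "fst (Fs ! k) = {x}"
    and j: "j < length Fs" "j \<noteq> k" "x \<in> fst (Fs ! j)"
  shows "subternaric_bond_rep D \<Sigma> R (merge_factors D j k Fs)"
    and "num_ternary (merge_factors D j k Fs) \<le> num_ternary Fs"
    and "weight (merge_factors D j k Fs) < weight Fs"
proof -
  have bd: "bondable Fs" and fin: "finite (fst (Fs ! j))" and "card (fst (Fs ! j)) \<le> 3"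
    using rep j by (auto simp: subternaric_bond_rep_def)
  moreover have "free_attrs [Fs ! j, Fs ! k] = fst (Fs ! j) - {x}"
    using k j by (auto simp: free_attrs_pair)
  ultimately have card_merged: "card (free_attrs [Fs ! j, Fs ! k]) \<le> 2"
    using j(3) by simp
  show "subternaric_bond_rep D \<Sigma> R (merge_factors D j k Fs)"
    using subternaric_bond_rep_merge_factors[OF rep j(1) k(1) j(2)] card_merged by simp
  show "num_ternary (merge_factors D j k Fs) \<le> num_ternary Fs"
    using num_ternary_merge_factors_le[OF j(1) k(1) j(2) bd] card_merged by simp
  show "weight (merge_factors D j k Fs) < weight Fs"
    using weight_merge_factors[where D = D, OF j(1) k(1) j(2) bd] fin k j(3) by simp
qed

lemma exists_rep_without_unary_factors:
  assumes no_cartesian: "\<not> has_unary_cartesian_factor D \<Sigma> R"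
    and rep: "subternaric_bond_rep D \<Sigma> R Fs"
  shows "\<exists>Fs'. subternaric_bond_rep D \<Sigma> R Fs' \<and> num_ternary Fs' \<le> num_ternary Fs
           \<and> (\<forall>i<length Fs'. card (fst (Fs' ! i)) \<noteq> 1)"
  using rep
proof (induction "weight Fs" arbitrary: Fs rule: less_induct)
  case less
  show ?case
  proof (cases "\<exists>k<length Fs. card (fst (Fs ! k)) = 1")
    case False
    then show ?thesis
      using less.prems by blast
  next
    case True
    then obtain k x where k: "k < length Fs" "fst (Fs ! k) = {x}"
      by (auto simp: card_1_singleton_iff)
    have "occ Fs x \<noteq> 1"
      using free_unary_factor_imp_cartesian[OF less.prems k] no_cartesian by blast
    moreover have "1 \<le> occ Fs x"
      using card_le_occ[of "{k}" Fs x] k by simp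
    ultimately have "2 \<le> occ Fs x"
      by arith
    then obtain j where j: "j < length Fs" "j \<noteq> k" "x \<in> fst (Fs ! j)"
      using exists_other_factor k(1) by blast
    let ?M = "merge_factors D j k Fs"
    obtain Fs' where "subternaric_bond_rep D \<Sigma> R Fs'" "num_ternary Fs' \<le> num_ternary ?M"
      "\<forall>i<length Fs'. card (fst (Fs' ! i)) \<noteq> 1"
      using less.hyps[of ?M] absorb_unary_factor[OF less.prems k j] by blast
    then show ?thesis
      using absorb_unary_factor(2)[OF less.prems k j] by (meson le_trans)
  qed
qed

lemma ter_le_num_ternary: "subternaric_bond_rep D \<Sigma> R Fs \<Longrightarrow> ter D \<Sigma> R \<le> enat (num_ternary Fs)"
  unfolding ter_def by (rule Inf_lower) blast

lemma ter_attained: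
  assumes "ter D \<Sigma> R \<noteq> \<infinity>"
  shows "\<exists>Fs. subternaric_bond_rep D \<Sigma> R Fs \<and> ter D \<Sigma> R = enat (num_ternary Fs)"
proof -
  let ?A = "{enat (num_ternary Fs) | Fs. subternaric_bond_rep D \<Sigma> R Fs}"
  have "?A \<noteq> {}"
  proof
    assume "?A = {}"
    then have "ter D \<Sigma> R = \<infinity>"
      unfolding ter_def by (simp add: top_enat_def)
    with assms show False ..
  qed
  then obtain t where "t \<in> ?A"
    by blast
  then have "Inf ?A \<in> ?A"
    by (rule wellorder_InfI)
  then obtain Fs where "subternaric_bond_rep D \<Sigma> R Fs" "Inf ?A = enat (num_ternary Fs)"
    by blast
  then show ?thesis
    unfolding ter_def by blast
qed

theorem corollary42:
  fixes D :: "'d set" and \<Sigma> :: "nat set" and R :: "(nat \<Rightarrow> 'd) set"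
  assumes "finite \<Sigma>"
    and "R \<subseteq> tuples D \<Sigma>"
    and "ter D \<Sigma> R \<noteq> \<infinity>"
    and "\<not> has_unary_cartesian_factor D \<Sigma> R"
  shows "even (the_enat (ter D \<Sigma> R)) \<longleftrightarrow> even (card \<Sigma>)"
proof -
  obtain Fs where rep: "subternaric_bond_rep D \<Sigma> R Fs" and ter: "ter D \<Sigma> R = enat (num_ternary Fs)"
    using ter_attained[OF assms(3)] by blast
  obtain Fs' where rep': "subternaric_bond_rep D \<Sigma> R Fs'" and "num_ternary Fs' \<le> num_ternary Fs"
    and no_unary: "\<forall>i<length Fs'. card (fst (Fs' ! i)) \<noteq> 1"
    using exists_rep_without_unary_factors[OF assms(4) rep] by blast
  moreover have "ter D \<Sigma> R \<le> enat (num_ternary Fs')"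
    using rep' by (rule ter_le_num_ternary)
  ultimately have "the_enat (ter D \<Sigma> R) = num_ternary Fs'"
    using ter by simp
  then show ?thesis
    using even_num_ternary_iff_even_card[OF rep' no_unary] by simp
qed

end
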